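(* Define $$\widetilde{\mathcal I}_q^N=\frac1{N^2}\log_2\frac{P_{Y^{N\times N}|X^{N\times N},\Phi}(Y^{N\times N}|X^{N\times N},\Phi)}{P_{Y^{N\times N}|X_{sf},\Phi}(Y^{N\times N}|X_{sf},\Phi)}.$$ Then for every $\epsilon>0$, $$\lim_{N\to\infty}\Pr\bigl(|\mathcal I_q^N-\widetilde{\mathcal I}_q^N|<\epsilon\bigr)=1.$$
   Context: ReRAM channel model. Fix resistances $0<R_1<R_0$ and $R_s>0$, and for $x,v\in\{0,1\}$ define $R_x(v)=\bigl(1/R_x+(1-x)v/R_s\bigr)^{-1}$. Fix $\sigma>0$, an integer $K\ge0$, $0<q<1$, and a probability vector $(p_0,\dots,p_K)$. For each $N$, the input $X^{N\times N}$ has i.i.d. Bernoulli$(q)$ entries. The SF pattern $\Phi\subseteq\{1,\dots,N\}^2$ is random with $\Pr(\Phi=\varphi)=p_k/\binom{N^2}{k}$ when $|\varphi|=k\le K$. The noise $Z_{m,n}\sim\mathcal N(0,\sigma^2)$ is i.i.d. The three objects $X$, $\Phi$ and $Z$ are mutually independent. The output is $$Y_{m,n}=R_{X_{m,n}}\Bigl(\bigvee_{(i,j)\in\Phi}X_{m,j}X_{i,j}X_{i,n}\Bigr)+Z_{m,n}.$$ $X_{sf}$ denotes the entries of $X^{N\times N}$ in rows $i$ or columns $j$ for which some $(i,j)\in\Phi$. $W^\Phi_N(y|x)=P_{Y^{N\times N}|X^{N\times N}}(y|x)$ is the conditional density averaged over $\Phi$. The mutual information density rate is $$\mathcal I_q^N=\frac1{N^2}\log_2\frac{W^\Phi_N(Y^{N\times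 N}|X^{N\times N})}{P_{Y^{N\times N}}(Y^{N\times N})}.$$ *)

theory Defs
  imports "HOL-Probability.Probability"
begin

type_synonym bmat = "nat \<times> nat \<Rightarrow> bool"
type_synonym rmat = "nat \<times> nat \<Rightarrow> real"
type_synonym pattern = "(nat \<times> nat) set"

definition grid :: "nat \<Rightarrow> (nat \<times> nat) set" where
  "grid N = {1..N} \<times> {1..N}"

text \<open>Binary N x N input matrices (entries outside the grid are fixed to False).\<close>
definition Xset :: "nat \<Rightarrow> bmat set" where
  "Xset N = {x. \<forall>ij. x ij \<longrightarrow> ij \<in> grid N}"

definition PX :: "real \<Rightarrow> nat \<Rightarrow> bmat \<Rightarrow> real" where
  "PX q N x = (\<Prod>ij\<in>grid N. if x ij then q else 1 - q)"

definition Phiset :: "nat \<Rightarrow> nat \<Rightarrow> pattern set" where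
  "Phiset K N = {\<phi>. \<phi> \<subseteq> grid N \<and> card \<phi> \<le> K}"

definition PPhi :: "(nat \<Rightarrow> real) \<Rightarrow> nat \<Rightarrow> pattern \<Rightarrow> real" where
  "PPhi p N \<phi> = p (card \<phi>) / real ((N\<^sup>2) choose (card \<phi>))"

definition Rcell :: "real \<Rightarrow> real \<Rightarrow> real \<Rightarrow> bool \<Rightarrow> bool \<Rightarrow> real" where
  "Rcell R0 R1 Rs x v =
     1 / (1 / (if x then R1 else R0) + (1 - of_bool x) * of_bool v / Rs)"

definition sneak :: "bmat \<Rightarrow> pattern \<Rightarrow> nat \<times> nat \<Rightarrow> bool" where
  "sneak x \<phi> mn = (\<exists>(i,j)\<in>\<phi>. x (fst mn, j) \<and> x (i, j) \<and> x (i, snd mn))"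

definition meanY :: "real \<Rightarrow> real \<Rightarrow> real \<Rightarrow> bmat \<Rightarrow> pattern \<Rightarrow> nat \<times> nat \<Rightarrow> real" where
  "meanY R0 R1 Rs x \<phi> mn = Rcell R0 R1 Rs (x mn) (sneak x \<phi> mn)"

definition Yout :: "real \<Rightarrow> real \<Rightarrow> real \<Rightarrow> bmat \<Rightarrow> pattern \<Rightarrow> rmat \<Rightarrow> rmat" where
  "Yout R0 R1 Rs x \<phi> z = (\<lambda>mn. meanY R0 R1 Rs x \<phi> mn + z mn)"

definition PYgXPhi :: "real \<Rightarrow> real \<Rightarrow> real \<Rightarrow> real \<Rightarrow> nat \<Rightarrow> rmat \<Rightarrow> bmat \<Rightarrow> pattern \<Rightarrow> real" where
  "PYgXPhi R0 R1 Rs \<sigma> N y x \<phi> =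
     (\<Prod>mn\<in>grid N. normal_density (meanY R0 R1 Rs x \<phi> mn) \<sigma> (y mn))"

definition WPhi :: "real \<Rightarrow> real \<Rightarrow> real \<Rightarrow> real \<Rightarrow> (nat \<Rightarrow> real) \<Rightarrow> nat \<Rightarrow> nat
     \<Rightarrow> rmat \<Rightarrow> bmat \<Rightarrow> real" where
  "WPhi R0 R1 Rs \<sigma> p K N y x =
     (\<Sum>\<phi>\<in>Phiset K N. PPhi p N \<phi> * PYgXPhi R0 R1 Rs \<sigma> N y x \<phi>)"

definition PY :: "real \<Rightarrow> real \<Rightarrow> real \<Rightarrow> real \<Rightarrow> real \<Rightarrow> (nat \<Rightarrow> real) \<Rightarrow> nat \<Rightarrow> nat
     \<Rightarrow> rmat \<Rightarrow> real" where
  "PY R0 R1 Rs \<sigma> q p K N y =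
     (\<Sum>x\<in>Xset N. PX q N x * WPhi R0 R1 Rs \<sigma> p K N y x)"

definition sfset :: "nat \<Rightarrow> pattern \<Rightarrow> (nat \<times> nat) set" where
  "sfset N \<phi> = {mn \<in> grid N. \<exists>(i,j)\<in>\<phi>. fst mn = i \<or> snd mn = j}"

text \<open>P_{Y|X_sf,Phi}(y|x_sf,phi): the entries of X outside X_sf are, given (X_sf,Phi),
  still i.i.d. Bernoulli(q) (independence of X and Phi), so they are averaged out.\<close>
definition PYgXsfPhi :: "real \<Rightarrow> real \<Rightarrow> real \<Rightarrow> real \<Rightarrow> real \<Rightarrow> nat
     \<Rightarrow> rmat \<Rightarrow> bmat \<Rightarrow> pattern \<Rightarrow> real" where
  "PYgXsfPhi R0 R1 Rs \<sigma> q N y x \<phi> =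
     (\<Sum>x'\<in>{x' \<in> Xset N. \<forall>mn\<in>sfset N \<phi>. x' mn = x mn}.
        (\<Prod>mn\<in>grid N - sfset N \<phi>. if x' mn then q else 1 - q)
        * PYgXPhi R0 R1 Rs \<sigma> N y x' \<phi>)"

definition XPhi_law :: "real \<Rightarrow> (nat \<Rightarrow> real) \<Rightarrow> nat \<Rightarrow> nat \<Rightarrow> (bmat \<times> pattern) measure" where
  "XPhi_law q p K N =
     density (count_space (Xset N \<times> Phiset K N))
       (\<lambda>(x,\<phi>). ennreal (PX q N x * PPhi p N \<phi>))"

definition Noise_law :: "real \<Rightarrow> nat \<Rightarrow> rmat measure" where
  "Noise_law \<sigma> N = PiM (grid N) (\<lambda>_. density lborel (normal_density 0 \<sigma>))"

definition Omega :: "real \<Rightarrow> real \<Rightarrow> (nat \<Rightarrow> real) \<Rightarrow> nat \<Rightarrow> nat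
     \<Rightarrow> ((bmat \<times> pattern) \<times> rmat) measure" where
  "Omega \<sigma> q p K N = XPhi_law q p K N \<Otimes>\<^sub>M Noise_law \<sigma> N"

definition Iq :: "real \<Rightarrow> real \<Rightarrow> real \<Rightarrow> real \<Rightarrow> real \<Rightarrow> (nat \<Rightarrow> real) \<Rightarrow> nat \<Rightarrow> nat
     \<Rightarrow> (bmat \<times> pattern) \<times> rmat \<Rightarrow> real" where
  "Iq R0 R1 Rs \<sigma> q p K N \<omega> =
     (let x = fst (fst \<omega>); \<phi> = snd (fst \<omega>); y = Yout R0 R1 Rs x \<phi> (snd \<omega>) in
      1 / real (N\<^sup>2) * log 2 (WPhi R0 R1 Rs \<sigma> p K N y x / PY R0 R1 Rs \<sigma> q p K N y))"

definition Iq_tilde :: "real \<Rightarrow> real \<Rightarrow> real \<Rightarrow> real \<Rightarrow> real \<Rightarrow> nat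
     \<Rightarrow> (bmat \<times> pattern) \<times> rmat \<Rightarrow> real" where
  "Iq_tilde R0 R1 Rs \<sigma> q N \<omega> =
     (let x = fst (fst \<omega>); \<phi> = snd (fst \<omega>); y = Yout R0 R1 Rs x \<phi> (snd \<omega>) in
      1 / real (N\<^sup>2) * log 2 (PYgXPhi R0 R1 Rs \<sigma> N y x \<phi> / PYgXsfPhi R0 R1 Rs \<sigma> q N y x \<phi>))"

end

theory Submission
  imports Defs "HOL-Real_Asymp.Real_Asymp"
begin

text \<open>Write \<open>W\<close>, \<open>P_Y\<close>, \<open>P_{Y|X,\<Phi>}\<close>, \<open>P_{Y|X_sf,\<Phi>}\<close> for the four densities. Then
  \<open>N\<^sup>2 (I - \<tilde>I) = log (W / P_{Y|X,\<Phi>}) - log (P_Y / P_{Y|X_sf,\<Phi>})\<close>. Both ratios are a density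
  divided by the true conditional density of \<open>Y\<close>, so each has expectation at most one (for the
  second this rests on the posterior of \<open>X\<close> given \<open>(Y, X_sf, \<Phi>)\<close> summing to one), and Markov's
  inequality bounds both by \<open>2^{\<epsilon>N/2}\<close> outside an event of probability \<open>2 \<cdot> 2^{-\<epsilon>N/2}\<close>.
  From below, both ratios are at least \<open>p_min N^{-2K} min(q,1-q)^{2KN}\<close>, because \<open>\<Phi>\<close> has at most
  \<open>K\<close> elements and \<open>X_sf\<close> at most \<open>2KN\<close> entries; so both logarithms are \<open>O(N) = o(N\<^sup>2)\<close>.\<close>

lemma emeasure_normal_density_shift:
  assumes [measurable]: "A \<in> sets borel"
  shows "emeasure (density lborel (normal_density 0 s)) {t. t + c \<in> A}
       = emeasure (density lborel (normal_density c s)) A"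
proof -
  have "emeasure (density lborel (normal_density c s)) A
      = (\<integral>\<^sup>+x. ennreal (normal_density c s x) * indicator A x \<partial>distr lborel borel ((+) c))"
    by (simp add: emeasure_density lborel_distr_plus)
  also have "\<dots> = (\<integral>\<^sup>+t. ennreal (normal_density c s (c + t)) * indicator A (c + t) \<partial>lborel)"
    by (subst nn_integral_distr) auto
  also have "\<dots> = (\<integral>\<^sup>+t. ennreal (normal_density 0 s t) * indicator {t. t + c \<in> A} t \<partial>lborel)"
    by (intro nn_integral_cong) (auto simp: normal_density_def indicator_def add.commute)
  also have "\<dots> = emeasure (density lborel (normal_density 0 s)) {t. t + c \<in> A}"
    by (simp add: emeasure_density)
  finally show ?thesis ..
qed

lemma product_sigma_finite_normal_density:
  "0 < s \<Longrightarrow> product_sigma_finite (\<lambda>i. density lborel (normal_density (\<mu> i) s))"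
  by (simp add: product_sigma_finite_def prob_space_imp_sigma_finite prob_space_normal_density)

lemma indicator_PiE_eq_prod:
  assumes "finite I" "y \<in> extensional I"
  shows "indicator (PiE I A) y = (\<Prod>i\<in>I. indicator (A i) (y i) :: ennreal)"
proof (cases "y \<in> PiE I A")
  case False
  then obtain i where "i \<in> I" "y i \<notin> A i" using assms(2) by (auto simp: PiE_def Pi_def)
  then show ?thesis using False assms(1) by (auto intro!: prod_zero bexI[of _ i])
qed (auto simp: indicator_def PiE_def Pi_def)

lemma PiM_normal_density_eq_density:
  assumes I: "finite I" and s: "0 < s"
  shows "PiM I (\<lambda>i. density lborel (normal_density (\<mu> i) s))
       = density (PiM I (\<lambda>_. lborel)) (\<lambda>y. \<Prod>i\<in>I. ennreal (normal_density (\<mu> i) s (y i)))"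
proof -
  interpret P: product_sigma_finite "\<lambda>i. density lborel (normal_density (\<mu> i) s)"
    using product_sigma_finite_normal_density[OF s] .
  interpret L: product_sigma_finite "\<lambda>_::'a. lborel"
    by (simp add: product_sigma_finite_def lborel.sigma_finite_measure_axioms)
  show ?thesis
  proof (rule P.PiM_eqI[symmetric, OF I])
    fix A assume "\<And>i. i \<in> I \<Longrightarrow> A i \<in> sets (density lborel (normal_density (\<mu> i) s))"
    then have A[measurable]: "\<And>i. i \<in> I \<Longrightarrow> A i \<in> sets borel" by auto
    have "PiE I A \<in> sets (PiM I (\<lambda>_. lborel))"
      by (intro sets_PiM_I_finite I) auto
    then have "emeasure (density (PiM I (\<lambda>_. lborel)) (\<lambda>y. \<Prod>i\<in>I. ennreal (normal_density (\<mu> i) s (y i)))) (PiE I A)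
       = (\<integral>\<^sup>+y. (\<Prod>i\<in>I. ennreal (normal_density (\<mu> i) s (y i)) * indicator (A i) (y i)) \<partial>PiM I (\<lambda>_. lborel))"
      by (auto simp: emeasure_density space_PiM PiE_iff indicator_PiE_eq_prod[OF I] prod.distrib
               intro!: nn_integral_cong)
    also have "\<dots> = (\<Prod>i\<in>I. emeasure (density lborel (normal_density (\<mu> i) s)) (A i))"
      by (subst L.product_nn_integral_prod[OF I]) (auto intro!: prod.cong simp: emeasure_density)
    finally show "emeasure (density (PiM I (\<lambda>_. lborel)) (\<lambda>y. \<Prod>i\<in>I. ennreal (normal_density (\<mu> i) s (y i)))) (PiE I A)
       = (\<Prod>i\<in>I. emeasure (density lborel (normal_density (\<mu> i) s)) (A i))" .
  qed (auto intro!: sets_PiM_cong)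
qed

lemma measurable_restrict_shift[measurable]:
  "(\<lambda>z. \<lambda>i\<in>I. z i + m i)
     \<in> measurable (PiM I (\<lambda>_. density lborel (normal_density 0 s))) (PiM I (\<lambda>_. lborel :: real measure))"
proof (rule measurable_restrict)
  fix i assume [measurable]: "i \<in> I"
  have "(\<lambda>z. z i) \<in> measurable (PiM I (\<lambda>_. density lborel (normal_density 0 s))) borel"
    using measurable_component_singleton[of i I "\<lambda>_. density lborel (normal_density 0 s)"] by simp
  then show "(\<lambda>z. z i + m i) \<in> measurable (PiM I (\<lambda>_. density lborel (normal_density 0 s))) lborel"
    unfolding measurable_lborel2 by measurable
qed

lemma distr_PiM_normal_density_shift:
  assumes I: "finite I" and s: "0 < s"
  shows "distr (PiM I (\<lambda>_. density lborel (normal_density 0 s))) (PiM I (\<lambda>_. lborel)) (\<lambda>z. \<lambda>i\<in>I. z i + m i)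
       = PiM I (\<lambda>i. density lborel (normal_density (m i) s))"
proof -
  interpret P: product_sigma_finite "\<lambda>i. density lborel (normal_density (m i) s)"
    using product_sigma_finite_normal_density[OF s] .
  interpret P0: product_sigma_finite "\<lambda>i::'a. density lborel (normal_density 0 s)"
    using product_sigma_finite_normal_density[OF s, of "\<lambda>_. 0"] .
  show ?thesis
  proof (rule P.PiM_eqI[OF I])
    fix A assume "\<And>i. i \<in> I \<Longrightarrow> A i \<in> sets (density lborel (normal_density (m i) s))"
    then have A[measurable]: "\<And>i. i \<in> I \<Longrightarrow> A i \<in> sets borel" by auto
    have "PiE I A \<in> sets (PiM I (\<lambda>_. lborel))"
      by (intro sets_PiM_I_finite I) auto
    moreover have "(\<lambda>z. \<lambda>i\<in>I. z i + m i) -` PiE I A \<inter> space (PiM I (\<lambda>_. density lborel (normal_density 0 s)))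
        = PiE I (\<lambda>i. {t. t + m i \<in> A i})"
      by (auto simp: space_PiM PiE_def Pi_def extensional_def)
    ultimately have "emeasure (distr (PiM I (\<lambda>_. density lborel (normal_density 0 s))) (PiM I (\<lambda>_. lborel))
          (\<lambda>z. \<lambda>i\<in>I. z i + m i)) (PiE I A)
       = emeasure (PiM I (\<lambda>_. density lborel (normal_density 0 s))) (PiE I (\<lambda>i. {t. t + m i \<in> A i}))"
      by (simp add: emeasure_distr)
    also have "\<dots> = (\<Prod>i\<in>I. emeasure (density lborel (normal_density 0 s)) {t. t + m i \<in> A i})"
      by (rule P0.emeasure_PiM[OF I]) auto
    also have "\<dots> = (\<Prod>i\<in>I. emeasure (density lborel (normal_density (m i) s)) (A i))"
      by (intro prod.cong refl emeasure_normal_density_shift) auto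
    finally show "emeasure (distr (PiM I (\<lambda>_. density lborel (normal_density 0 s))) (PiM I (\<lambda>_. lborel))
          (\<lambda>z. \<lambda>i\<in>I. z i + m i)) (PiE I A)
       = (\<Prod>i\<in>I. emeasure (density lborel (normal_density (m i) s)) (A i))" .
  qed (auto intro!: sets_PiM_cong)
qed

lemma nn_integral_PiM_normal_density_shift:
  assumes I: "finite I" and s: "0 < s" and [measurable]: "H \<in> borel_measurable (PiM I (\<lambda>_. lborel))"
  shows "(\<integral>\<^sup>+z. H (\<lambda>i\<in>I. z i + m i) \<partial>PiM I (\<lambda>_. density lborel (normal_density 0 s)))
       = (\<integral>\<^sup>+y. (\<Prod>i\<in>I. ennreal (normal_density (m i) s (y i))) * H y \<partial>PiM I (\<lambda>_. lborel))"
proof -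
  have "(\<integral>\<^sup>+z. H (\<lambda>i\<in>I. z i + m i) \<partial>PiM I (\<lambda>_. density lborel (normal_density 0 s)))
      = (\<integral>\<^sup>+y. H y \<partial>distr (PiM I (\<lambda>_. density lborel (normal_density 0 s))) (PiM I (\<lambda>_. lborel))
            (\<lambda>z. \<lambda>i\<in>I. z i + m i))"
    by (subst nn_integral_distr) auto
  also have "\<dots> = (\<integral>\<^sup>+y. H y \<partial>density (PiM I (\<lambda>_. lborel)) (\<lambda>y. \<Prod>i\<in>I. ennreal (normal_density (m i) s (y i))))"
    by (subst distr_PiM_normal_density_shift[OF I s]) (subst PiM_normal_density_eq_density[OF I s], rule refl)
  also have "\<dots> = (\<integral>\<^sup>+y. (\<Prod>i\<in>I. ennreal (normal_density (m i) s (y i))) * H y \<partial>PiM I (\<lambda>_. lborel))"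
    by (rule nn_integral_density) measurable
  finally show ?thesis .
qed

definition agree_off :: "'a set \<Rightarrow> ('a \<Rightarrow> 'b) \<Rightarrow> ('a \<Rightarrow> 'b) set" where
  "agree_off U b = {x. \<forall>i. i \<notin> U \<longrightarrow> x i = b i}"

lemma finite_agree_off_bool: "finite U \<Longrightarrow> finite (agree_off U (b :: 'a \<Rightarrow> bool))"
proof -
  assume U: "finite U"
  have "agree_off U b \<subseteq> (\<lambda>S i. if i \<in> U then i \<in> S else b i) ` Pow U"
  proof
    fix x assume "x \<in> agree_off U b"
    then have "x = (\<lambda>i. if i \<in> U then i \<in> {i\<in>U. x i} else b i)"
      by (auto simp: agree_off_def)
    then show "x \<in> (\<lambda>S i. if i \<in> U then i \<in> S else b i) ` Pow U" by blast
  qed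
  then show ?thesis using U by (meson finite_Pow_iff finite_imageI finite_subset)
qed

lemma agree_off_insert:
  assumes "a \<notin> U"
  shows "agree_off (insert a U) b = agree_off U (b(a:=True)) \<union> agree_off U (b(a:=False))"
    and "agree_off U (b(a:=True)) \<inter> agree_off U (b(a:=False)) = {}"
  using assms by (auto simp: agree_off_def)

lemma sum_agree_off_bernoulli_prod:
  fixes q :: "'c :: comm_ring_1"
  assumes "finite U"
  shows "(\<Sum>x\<in>agree_off U b. \<Prod>i\<in>U. if x i then q else 1 - q) = 1"
  using assms
proof (induction U arbitrary: b rule: finite_induct)
  case empty
  have "agree_off {} b = {b}" by (auto simp: agree_off_def)
  then show ?case by simp
next
  case (insert a U)
  have branch: "(\<Sum>x\<in>agree_off U (b(a:=c)). \<Prod>i\<in>insert a U. if x i then q else 1 - q)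
      = (if c then q else 1 - q)" for c
  proof -
    have "(\<Sum>x\<in>agree_off U (b(a:=c)). \<Prod>i\<in>insert a U. if x i then q else 1 - q)
        = (\<Sum>x\<in>agree_off U (b(a:=c)). (if c then q else 1 - q) * (\<Prod>i\<in>U. if x i then q else 1 - q))"
      using insert.hyps by (intro sum.cong refl) (auto simp: agree_off_def)
    then show ?thesis
      by (simp add: sum_distrib_left[symmetric] insert.IH)
  qed
  have "(\<Sum>x\<in>agree_off (insert a U) b. \<Prod>i\<in>insert a U. if x i then q else 1 - q)
     = (\<Sum>x\<in>agree_off U (b(a:=True)). \<Prod>i\<in>insert a U. if x i then q else 1 - q)
       + (\<Sum>x\<in>agree_off U (b(a:=False)). \<Prod>i\<in>insert a U. if x i then q else 1 - q)"
    unfolding agree_off_insert(1)[OF insert.hyps(2)]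
    by (rule sum.union_disjoint)
       (simp_all add: finite_agree_off_bool insert.hyps agree_off_insert(2)[OF insert.hyps(2)])
  then show ?case by (simp only: branch) simp
qed

lemma sum_div_class_sum:
  fixes wS wO A :: "'a \<Rightarrow> real"
  assumes X: "finite X"
    and sym: "\<And>x y. x \<in> X \<Longrightarrow> y \<in> X \<Longrightarrow> ag x y \<Longrightarrow> ag y x"
    and trans: "\<And>x y z. x \<in> X \<Longrightarrow> y \<in> X \<Longrightarrow> z \<in> X \<Longrightarrow> ag x y \<Longrightarrow> ag y z \<Longrightarrow> ag x z"
    and wS: "\<And>x y. x \<in> X \<Longrightarrow> y \<in> X \<Longrightarrow> ag x y \<Longrightarrow> wS x = wS y"
    and wO: "\<And>x. x \<in> X \<Longrightarrow> (\<Sum>x'\<in>{x'\<in>X. ag x x'}. wO x') = 1"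
    and nz: "\<And>x. x \<in> X \<Longrightarrow> (\<Sum>x'\<in>{x'\<in>X. ag x x'}. wO x' * A x') \<noteq> 0"
  shows "(\<Sum>x\<in>X. wS x * wO x * A x / (\<Sum>x'\<in>{x'\<in>X. ag x x'}. wO x' * A x'))
       = (\<Sum>x\<in>X. wS x * wO x)"
proof -
  define B where "B x = (\<Sum>x'\<in>{x'\<in>X. ag x x'}. wO x' * A x')" for x
  have B_cong: "B x = B y" if "x \<in> X" "y \<in> X" "ag x y" for x y
  proof -
    have "{x'\<in>X. ag x x'} = {x'\<in>X. ag y x'}"
      using that sym trans by blast
    then show ?thesis by (simp add: B_def)
  qed
  have B_eq: "B x = (\<Sum>x'\<in>X. if ag x x' then wO x' * A x' else 0)" for x
    unfolding B_def using X by (simp add: sum.inter_filter)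
  have wO_eq: "(\<Sum>x'\<in>X. if ag x x' then wO x' else 0) = 1" if "x \<in> X" for x
    using wO[OF that] X by (simp add: sum.inter_filter)
  have "(\<Sum>x\<in>X. wS x * wO x * A x / B x)
      = (\<Sum>x\<in>X. wS x * wO x * A x / B x * (\<Sum>x''\<in>X. if ag x x'' then wO x'' else 0))"
    by (intro sum.cong refl) (simp add: wO_eq)
  also have "\<dots> = (\<Sum>x\<in>X. \<Sum>x''\<in>X. if ag x x'' then wS x * wO x * A x / B x * wO x'' else 0)"
    by (simp add: sum_distrib_left if_distrib cong: if_cong)
  also have "\<dots> = (\<Sum>x''\<in>X. \<Sum>x\<in>X. if ag x x'' then wS x * wO x * A x / B x * wO x'' else 0)"
    by (rule sum.swap)
  also have "\<dots> = (\<Sum>x''\<in>X. \<Sum>x\<in>X. wS x'' * wO x'' / B x'' * (if ag x'' x then wO x * A x else 0))"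
  proof (intro sum.cong refl)
    fix x'' x assume h: "x'' \<in> X" "x \<in> X"
    show "(if ag x x'' then wS x * wO x * A x / B x * wO x'' else 0)
        = wS x'' * wO x'' / B x'' * (if ag x'' x then wO x * A x else 0)"
      using h sym[OF h(2) h(1)] sym[OF h(1) h(2)] wS[OF h(2) h(1)] B_cong[OF h(2) h(1)] by auto
  qed
  also have "\<dots> = (\<Sum>x''\<in>X. wS x'' * wO x'' / B x'' * B x'')"
    by (simp add: B_eq sum_distrib_left)
  also have "\<dots> = (\<Sum>x\<in>X. wS x * wO x)"
    using nz by (intro sum.cong refl) (simp add: B_def)
  finally show ?thesis unfolding B_def .
qed

lemma (in prob_space) Markov_prob_le_inverse:
  assumes [measurable]: "U \<in> borel_measurable M" and int: "(\<integral>\<^sup>+\<omega>. U \<omega> \<partial>M) \<le> 1" and T: "0 < T"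
  shows "prob {\<omega> \<in> space M. ennreal T \<le> U \<omega>} \<le> 1 / T"
proof -
  have "{\<omega> \<in> space M. ennreal T \<le> U \<omega>} \<subseteq> {\<omega> \<in> space M. 1 \<le> ennreal (1 / T) * U \<omega>}"
  proof safe
    fix \<omega> assume "ennreal T \<le> U \<omega>"
    then have "ennreal (1 / T) * ennreal T \<le> ennreal (1 / T) * U \<omega>"
      by (rule mult_left_mono) simp
    then show "1 \<le> ennreal (1 / T) * U \<omega>"
      using T by (simp flip: ennreal_mult)
  qed
  then have "emeasure M {\<omega> \<in> space M. ennreal T \<le> U \<omega>} \<le> emeasure M {\<omega> \<in> space M. 1 \<le> ennreal (1 / T) * U \<omega>}"
    by (rule emeasure_mono) measurable
  also have "\<dots> \<le> ennreal (1 / T) * (\<integral>\<^sup>+\<omega>. U \<omega> * indicator (space M) \<omega> \<partial>M)"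
    by (rule nn_integral_Markov_inequality) measurable
  also have "(\<integral>\<^sup>+\<omega>. U \<omega> * indicator (space M) \<omega> \<partial>M) = (\<integral>\<^sup>+\<omega>. U \<omega> \<partial>M)"
    by (intro nn_integral_cong) simp
  also have "ennreal (1 / T) * \<dots> \<le> ennreal (1 / T)"
    using mult_left_mono[OF int, of "ennreal (1 / T)"] by simp
  finally show ?thesis
    using T by (simp add: emeasure_eq_measure)
qed

lemma (in prob_space) Markov_prob_both_less_ge:
  assumes [measurable]: "U \<in> borel_measurable M" "V \<in> borel_measurable M"
    and "(\<integral>\<^sup>+\<omega>. U \<omega> \<partial>M) \<le> 1" "(\<integral>\<^sup>+\<omega>. V \<omega> \<partial>M) \<le> 1" and T: "0 < T"
  shows "1 - 2 / T \<le> prob {\<omega> \<in> space M. U \<omega> < ennreal T \<and> V \<omega> < ennreal T}"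
proof -
  define bad where "bad = {\<omega> \<in> space M. ennreal T \<le> U \<omega>} \<union> {\<omega> \<in> space M. ennreal T \<le> V \<omega>}"
  have bad_events: "bad \<in> events"
    unfolding bad_def by measurable
  have "prob bad \<le> prob {\<omega> \<in> space M. ennreal T \<le> U \<omega>} + prob {\<omega> \<in> space M. ennreal T \<le> V \<omega>}"
    unfolding bad_def by (rule measure_Un_le) measurable
  also have "\<dots> \<le> 2 / T"
    using Markov_prob_le_inverse[of U T] Markov_prob_le_inverse[of V T] assms by simp
  finally have "1 - 2 / T \<le> prob (space M - bad)"
    by (simp add: prob_compl[OF bad_events])
  also have "space M - bad = {\<omega> \<in> space M. U \<omega> < ennreal T \<and> V \<omega> < ennreal T}"
    by (auto simp: bad_def not_le)
  finally show ?thesis .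
qed

lemma abs_log_diff_less:
  fixes L u v T :: real
  assumes "0 < L" "L \<le> u" "u < T" "L \<le> v" "v < T" "log 2 T - log 2 L \<le> c"
  shows "\<bar>log 2 u - log 2 v\<bar> < c"
proof -
  have "log 2 L \<le> log 2 u" "log 2 u < log 2 T" "log 2 L \<le> log 2 v" "log 2 v < log 2 T"
    using assms by auto
  then show ?thesis using assms(6) by linarith
qed

abbreviation lebesgue_grid :: "nat \<Rightarrow> rmat measure" where
  "lebesgue_grid N \<equiv> PiM (grid N) (\<lambda>_. lborel)"

lemma finite_grid [simp]: "finite (grid N)"
  by (simp add: grid_def)

lemma card_grid: "card (grid N) = N\<^sup>2"
  by (simp add: grid_def card_cartesian_product power2_eq_square)

lemma Xset_eq_agree_off: "Xset N = agree_off (grid N) (\<lambda>_. False)"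
  by (auto simp: Xset_def agree_off_def)

lemma finite_Xset [simp]: "finite (Xset N)"
  by (simp add: Xset_eq_agree_off finite_agree_off_bool)

lemma finite_Phiset [simp]: "finite (Phiset K N)"
  by (rule finite_subset[of _ "Pow (grid N)"]) (auto simp: Phiset_def)

lemma sum_PX: "(\<Sum>x\<in>Xset N. PX q N x) = 1"
  unfolding Xset_eq_agree_off PX_def by (rule sum_agree_off_bernoulli_prod) simp

lemma sfset_subset_grid: "sfset N \<phi> \<subseteq> grid N"
  by (auto simp: sfset_def)

lemma PX_split:
  "PX q N x = (\<Prod>mn\<in>sfset N \<phi>. if x mn then q else 1 - q) * (\<Prod>mn\<in>grid N - sfset N \<phi>. if x mn then q else 1 - q)"
  unfolding PX_def by (subst prod.subset_diff[OF sfset_subset_grid]) (auto simp: mult.commute)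

lemma sf_class_eq_agree_off:
  assumes "x \<in> Xset N"
  shows "{x' \<in> Xset N. \<forall>mn\<in>sfset N \<phi>. x' mn = x mn}
       = agree_off (grid N - sfset N \<phi>) (\<lambda>mn. if mn \<in> sfset N \<phi> then x mn else False)"
  using assms sfset_subset_grid[of N \<phi>] by (auto simp: Xset_def agree_off_def) blast+

lemma sum_sf_class_weights_off_sf:
  fixes q :: real
  assumes "x \<in> Xset N"
  shows "(\<Sum>x'\<in>{x' \<in> Xset N. \<forall>mn\<in>sfset N \<phi>. x' mn = x mn}.
            \<Prod>mn\<in>grid N - sfset N \<phi>. if x' mn then q else 1 - q) = 1"
  unfolding sf_class_eq_agree_off[OF assms] by (rule sum_agree_off_bernoulli_prod) simp

lemma sum_PPhi: "(\<Sum>\<phi>\<in>Phiset K N. PPhi p N \<phi>) = (\<Sum>k\<le>K. if k \<le> N\<^sup>2 then p k else 0)"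
proof -
  have "(\<Sum>\<phi>\<in>Phiset K N. PPhi p N \<phi>) = (\<Sum>k\<le>K. \<Sum>\<phi>\<in>{\<phi> \<in> Phiset K N. card \<phi> = k}. PPhi p N \<phi>)"
    by (rule sum.group[symmetric]) (auto simp: Phiset_def)
  also have "\<dots> = (\<Sum>k\<le>K. if k \<le> N\<^sup>2 then p k else 0)"
  proof (intro sum.cong refl)
    fix k assume "k \<in> {..K}"
    then have "{\<phi> \<in> Phiset K N. card \<phi> = k} = {B. B \<subseteq> grid N \<and> card B = k}"
      by (auto simp: Phiset_def)
    then show "(\<Sum>\<phi>\<in>{\<phi> \<in> Phiset K N. card \<phi> = k}. PPhi p N \<phi>) = (if k \<le> N\<^sup>2 then p k else 0)"
      by (simp add: PPhi_def n_subsets card_grid)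
  qed
  finally show ?thesis .
qed

lemma PYgXPhi_pos: "0 < \<sigma> \<Longrightarrow> 0 < PYgXPhi R0 R1 Rs \<sigma> N y x \<phi>"
  unfolding PYgXPhi_def by (intro prod_pos normal_density_pos)

lemma PYgXPhi_restrict: "PYgXPhi R0 R1 Rs \<sigma> N (restrict y (grid N)) x \<phi> = PYgXPhi R0 R1 Rs \<sigma> N y x \<phi>"
  unfolding PYgXPhi_def by (intro prod.cong) auto

lemma WPhi_restrict: "WPhi R0 R1 Rs \<sigma> p K N (restrict y (grid N)) x = WPhi R0 R1 Rs \<sigma> p K N y x"
  unfolding WPhi_def by (simp add: PYgXPhi_restrict)

lemma PY_restrict: "PY R0 R1 Rs \<sigma> q p K N (restrict y (grid N)) = PY R0 R1 Rs \<sigma> q p K N y"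
  unfolding PY_def by (simp add: WPhi_restrict)

lemma PYgXsfPhi_restrict:
  "PYgXsfPhi R0 R1 Rs \<sigma> q N (restrict y (grid N)) x \<phi> = PYgXsfPhi R0 R1 Rs \<sigma> q N y x \<phi>"
  unfolding PYgXsfPhi_def by (simp add: PYgXPhi_restrict)

lemma restrict_Yout: "restrict (Yout R0 R1 Rs x \<phi> z) (grid N) = (\<lambda>i\<in>grid N. z i + meanY R0 R1 Rs x \<phi> i)"
  by (auto simp: Yout_def restrict_def fun_eq_iff)

lemma measurable_PYgXPhi [measurable]:
  "(\<lambda>y. PYgXPhi R0 R1 Rs \<sigma> N y x \<phi>) \<in> borel_measurable (lebesgue_grid N)"
  unfolding PYgXPhi_def by measurable

lemma measurable_WPhi [measurable]:
  "(\<lambda>y. WPhi R0 R1 Rs \<sigma> p K N y x) \<in> borel_measurable (lebesgue_grid N)"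
  unfolding WPhi_def by measurable

lemma measurable_PY [measurable]:
  "(\<lambda>y. PY R0 R1 Rs \<sigma> q p K N y) \<in> borel_measurable (lebesgue_grid N)"
  unfolding PY_def by measurable

lemma measurable_PYgXsfPhi [measurable]:
  "(\<lambda>y. PYgXsfPhi R0 R1 Rs \<sigma> q N y x \<phi>) \<in> borel_measurable (lebesgue_grid N)"
  unfolding PYgXsfPhi_def by measurable

lemma prob_space_Noise_law: "0 < \<sigma> \<Longrightarrow> prob_space (Noise_law \<sigma> N)"
  unfolding Noise_law_def by (intro prob_space_PiM prob_space_normal_density)

lemma measurable_comp_Yout:
  assumes [measurable]: "H \<in> borel_measurable (lebesgue_grid N)"
    and H_restrict: "\<And>y. H (restrict y (grid N)) = H y"
  shows "(\<lambda>z. H (Yout R0 R1 Rs x \<phi> z)) \<in> borel_measurable (Noise_law \<sigma> N)"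
proof -
  have "(\<lambda>z. H (\<lambda>i\<in>grid N. z i + meanY R0 R1 Rs x \<phi> i)) \<in> borel_measurable (Noise_law \<sigma> N)"
    unfolding Noise_law_def by measurable
  then show ?thesis
    by (simp add: H_restrict[of "Yout R0 R1 Rs x \<phi> _", symmetric] restrict_Yout)
qed

lemma nn_integral_Noise_law_Yout:
  assumes \<sigma>: "0 < \<sigma>" and [measurable]: "H \<in> borel_measurable (lebesgue_grid N)"
    and H_restrict: "\<And>y. H (restrict y (grid N)) = H y"
  shows "(\<integral>\<^sup>+z. H (Yout R0 R1 Rs x \<phi> z) \<partial>Noise_law \<sigma> N)
       = (\<integral>\<^sup>+y. ennreal (PYgXPhi R0 R1 Rs \<sigma> N y x \<phi>) * H y \<partial>lebesgue_grid N)"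
proof -
  have "(\<integral>\<^sup>+z. H (Yout R0 R1 Rs x \<phi> z) \<partial>Noise_law \<sigma> N)
      = (\<integral>\<^sup>+z. H (\<lambda>i\<in>grid N. z i + meanY R0 R1 Rs x \<phi> i) \<partial>Noise_law \<sigma> N)"
    by (simp add: H_restrict[of "Yout R0 R1 Rs x \<phi> _", symmetric] restrict_Yout)
  also have "\<dots> = (\<integral>\<^sup>+y. (\<Prod>i\<in>grid N. ennreal (normal_density (meanY R0 R1 Rs x \<phi> i) \<sigma> (y i))) * H y
                     \<partial>lebesgue_grid N)"
    unfolding Noise_law_def by (rule nn_integral_PiM_normal_density_shift) (use \<sigma> in auto)
  also have "\<dots> = (\<integral>\<^sup>+y. ennreal (PYgXPhi R0 R1 Rs \<sigma> N y x \<phi>) * H y \<partial>lebesgue_grid N)"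
    unfolding PYgXPhi_def by (simp add: prod_ennreal)
  finally show ?thesis .
qed

lemma nn_integral_PYgXPhi:
  assumes \<sigma>: "0 < \<sigma>"
  shows "(\<integral>\<^sup>+y. ennreal (PYgXPhi R0 R1 Rs \<sigma> N y x \<phi>) \<partial>lebesgue_grid N) = 1"
proof -
  interpret prob_space "Noise_law \<sigma> N" by (rule prob_space_Noise_law[OF \<sigma>])
  have "(\<integral>\<^sup>+y. ennreal (PYgXPhi R0 R1 Rs \<sigma> N y x \<phi>) \<partial>lebesgue_grid N)
      = (\<integral>\<^sup>+z. 1 \<partial>Noise_law \<sigma> N)"
    using nn_integral_Noise_law_Yout[OF \<sigma>, of "\<lambda>_. 1"] by simp
  then show ?thesis by (simp add: emeasure_space_1)
qed

lemma card_sfset_le: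
  assumes "\<phi> \<in> Phiset K N"
  shows "card (sfset N \<phi>) \<le> 2 * K * N"
proof -
  let ?cross = "\<lambda>(i, j). ({i} \<times> {1..N}) \<union> ({1..N} \<times> {j})"
  have fin: "finite \<phi>"
    using assms by (auto simp: Phiset_def intro: finite_subset[OF _ finite_grid])
  have "card (sfset N \<phi>) \<le> card (\<Union>ij\<in>\<phi>. ?cross ij)"
    by (rule card_mono) (auto simp: fin sfset_def grid_def)
  also have "\<dots> \<le> (\<Sum>ij\<in>\<phi>. card (?cross ij))"
    by (rule card_UN_le[OF fin])
  also have "\<dots> \<le> (\<Sum>ij\<in>\<phi>. 2 * N)"
  proof (intro sum_mono)
    fix ij :: "nat \<times> nat"
    show "card (?cross ij) \<le> 2 * N"
      using card_Un_le[of "{fst ij} \<times> {1..N}" "{1..N} \<times> {snd ij}"]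
      by (simp add: case_prod_beta card_cartesian_product)
  qed
  also have "\<dots> \<le> 2 * N * K"
    using assms by (auto simp: Phiset_def)
  finally show ?thesis by (simp add: mult_ac)
qed

locale reram_channel =
  fixes R0 R1 Rs \<sigma> q :: real and p :: "nat \<Rightarrow> real" and K :: nat
  assumes sigma_pos: "0 < \<sigma>" and q_pos: "0 < q" and q_less_1: "q < 1"
    and p_nonneg: "\<And>k. k \<le> K \<Longrightarrow> 0 \<le> p k" and sum_p: "(\<Sum>k\<le>K. p k) = 1"
begin

abbreviation "lik N y x \<phi> \<equiv> PYgXPhi R0 R1 Rs \<sigma> N y x \<phi>"
abbreviation "lik_sf N y x \<phi> \<equiv> PYgXsfPhi R0 R1 Rs \<sigma> q N y x \<phi>"
abbreviation "mix N y x \<equiv> WPhi R0 R1 Rs \<sigma> p K N y x"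
abbreviation "out N y \<equiv> PY R0 R1 Rs \<sigma> q p K N y"
abbreviation "Y x \<phi> z \<equiv> Yout R0 R1 Rs x \<phi> z"

lemma PX_nonneg: "0 \<le> PX q N x"
  unfolding PX_def using q_pos q_less_1 by (intro prod_nonneg) auto

lemma PPhi_nonneg: "\<phi> \<in> Phiset K N \<Longrightarrow> 0 \<le> PPhi p N \<phi>"
  using p_nonneg unfolding PPhi_def Phiset_def by auto

lemma sum_PPhi_le_1: "(\<Sum>\<phi>\<in>Phiset K N. PPhi p N \<phi>) \<le> 1"
proof -
  have "(\<Sum>k\<le>K. if k \<le> N\<^sup>2 then p k else 0) \<le> (\<Sum>k\<le>K. p k)"
    using p_nonneg by (intro sum_mono) auto
  then show ?thesis using sum_p by (simp add: sum_PPhi)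
qed

lemma sum_PPhi_eq_1: "K \<le> N\<^sup>2 \<Longrightarrow> (\<Sum>\<phi>\<in>Phiset K N. PPhi p N \<phi>) = 1"
  using sum_p by (simp add: sum_PPhi)

lemma lik_pos: "0 < lik N y x \<phi>"
  by (rule PYgXPhi_pos[OF sigma_pos])

lemma mix_nonneg: "0 \<le> mix N y x"
  unfolding WPhi_def by (intro sum_nonneg mult_nonneg_nonneg PPhi_nonneg less_imp_le[OF lik_pos])

lemma out_nonneg: "0 \<le> out N y"
  unfolding PY_def by (intro sum_nonneg mult_nonneg_nonneg PX_nonneg mix_nonneg)

lemma lik_sf_pos:
  assumes "x \<in> Xset N"
  shows "0 < lik_sf N y x \<phi>"
proof -
  let ?f = "\<lambda>x'. (\<Prod>mn\<in>grid N - sfset N \<phi>. if x' mn then q else 1 - q) * lik N y x' \<phi>"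
  have "0 < ?f x"
    using q_pos q_less_1 by (intro mult_pos_pos prod_pos lik_pos) auto
  also have "?f x \<le> (\<Sum>x'\<in>{x' \<in> Xset N. \<forall>mn\<in>sfset N \<phi>. x' mn = x mn}. ?f x')"
    using assms q_pos q_less_1
    by (intro member_le_sum) (auto intro!: mult_nonneg_nonneg prod_nonneg less_imp_le[OF lik_pos])
  finally show ?thesis unfolding PYgXsfPhi_def .
qed

text \<open>Within each class of inputs sharing \<open>X_sf\<close> the denominator is the \<open>P_X\<close>-weighted average
  of the numerator, so every class contributes exactly its \<open>P_X\<close>-mass.\<close>
lemma sum_PX_lik_div_lik_sf:
  "(\<Sum>x\<in>Xset N. PX q N x * lik N y x \<phi> / lik_sf N y x \<phi>) = 1"
proof -
  define wS where "wS x = (\<Prod>mn\<in>sfset N \<phi>. if x mn then q else 1 - q)" for x :: bmat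
  define wO where "wO x = (\<Prod>mn\<in>grid N - sfset N \<phi>. if x mn then q else 1 - q)" for x :: bmat
  define agree where "agree x x' = (\<forall>mn\<in>sfset N \<phi>. x' mn = x mn)" for x x' :: bmat
  have lik_sf_eq: "lik_sf N y x \<phi> = (\<Sum>x'\<in>{x'\<in>Xset N. agree x x'}. wO x' * lik N y x' \<phi>)" for x
    unfolding PYgXsfPhi_def wO_def agree_def ..
  have "(\<Sum>x\<in>Xset N. PX q N x * lik N y x \<phi> / lik_sf N y x \<phi>)
      = (\<Sum>x\<in>Xset N. wS x * wO x * lik N y x \<phi> / (\<Sum>x'\<in>{x'\<in>Xset N. agree x x'}. wO x' * lik N y x' \<phi>))"
    by (simp add: lik_sf_eq PX_split[of q N _ \<phi>] wS_def wO_def)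
  also have "\<dots> = (\<Sum>x\<in>Xset N. wS x * wO x)"
  proof (rule sum_div_class_sum)
    show "\<And>x. x \<in> Xset N \<Longrightarrow> (\<Sum>x'\<in>{x'\<in>Xset N. agree x x'}. wO x') = 1"
      unfolding agree_def wO_def by (rule sum_sf_class_weights_off_sf)
    show "\<And>x. x \<in> Xset N \<Longrightarrow> (\<Sum>x'\<in>{x'\<in>Xset N. agree x x'}. wO x' * lik N y x' \<phi>) \<noteq> 0"
      using lik_sf_pos lik_sf_eq by (metis less_irrefl)
    show "\<And>x x'. x \<in> Xset N \<Longrightarrow> x' \<in> Xset N \<Longrightarrow> agree x x' \<Longrightarrow> wS x = wS x'"
      unfolding agree_def wS_def by (auto intro!: prod.cong)
  qed (auto simp: agree_def)
  also have "\<dots> = 1"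
    using sum_PX[of q N] by (simp add: PX_split[of q N _ \<phi>] wS_def wO_def)
  finally show ?thesis .
qed

lemma nn_integral_mix:
  "(\<integral>\<^sup>+y. ennreal (mix N y x) \<partial>lebesgue_grid N) = ennreal (\<Sum>\<phi>\<in>Phiset K N. PPhi p N \<phi>)"
proof -
  have "(\<integral>\<^sup>+y. ennreal (mix N y x) \<partial>lebesgue_grid N)
      = (\<integral>\<^sup>+y. (\<Sum>\<phi>\<in>Phiset K N. ennreal (PPhi p N \<phi>) * ennreal (lik N y x \<phi>)) \<partial>lebesgue_grid N)"
    unfolding WPhi_def
    by (intro nn_integral_cong)
       (auto simp: ennreal_mult[symmetric] PPhi_nonneg less_imp_le[OF lik_pos]
             intro!: sum_ennreal[symmetric] mult_nonneg_nonneg)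
  also have "\<dots> = (\<Sum>\<phi>\<in>Phiset K N. ennreal (PPhi p N \<phi>) * (\<integral>\<^sup>+y. ennreal (lik N y x \<phi>) \<partial>lebesgue_grid N))"
    by (simp add: nn_integral_sum nn_integral_cmult)
  also have "\<dots> = ennreal (\<Sum>\<phi>\<in>Phiset K N. PPhi p N \<phi>)"
    by (simp add: nn_integral_PYgXPhi[OF sigma_pos] PPhi_nonneg)
  finally show ?thesis .
qed

lemma nn_integral_out:
  "(\<integral>\<^sup>+y. ennreal (out N y) \<partial>lebesgue_grid N) = ennreal (\<Sum>\<phi>\<in>Phiset K N. PPhi p N \<phi>)"
proof -
  have "(\<integral>\<^sup>+y. ennreal (out N y) \<partial>lebesgue_grid N)
      = (\<integral>\<^sup>+y. (\<Sum>x\<in>Xset N. ennreal (PX q N x) * ennreal (mix N y x)) \<partial>lebesgue_grid N)"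
    unfolding PY_def
    by (intro nn_integral_cong)
       (auto simp: ennreal_mult[symmetric] PX_nonneg mix_nonneg intro!: sum_ennreal[symmetric] mult_nonneg_nonneg)
  also have "\<dots> = (\<Sum>x\<in>Xset N. ennreal (PX q N x)) * ennreal (\<Sum>\<phi>\<in>Phiset K N. PPhi p N \<phi>)"
    by (simp add: nn_integral_sum nn_integral_cmult nn_integral_mix sum_distrib_right)
  also have "\<dots> = ennreal (\<Sum>\<phi>\<in>Phiset K N. PPhi p N \<phi>)"
    by (simp add: PX_nonneg sum_PX)
  finally show ?thesis .
qed

lemma nn_integral_mix_div_lik_le_1:
  "(\<integral>\<^sup>+z. ennreal (mix N (Y x \<phi> z) x / lik N (Y x \<phi> z) x \<phi>) \<partial>Noise_law \<sigma> N) \<le> 1"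
proof -
  have "(\<integral>\<^sup>+z. ennreal (mix N (Y x \<phi> z) x / lik N (Y x \<phi> z) x \<phi>) \<partial>Noise_law \<sigma> N)
      = (\<integral>\<^sup>+y. ennreal (lik N y x \<phi>) * ennreal (mix N y x / lik N y x \<phi>) \<partial>lebesgue_grid N)"
    by (rule nn_integral_Noise_law_Yout[OF sigma_pos]) (auto simp: WPhi_restrict PYgXPhi_restrict)
  also have "\<dots> = (\<integral>\<^sup>+y. ennreal (mix N y x) \<partial>lebesgue_grid N)"
    by (intro nn_integral_cong)
       (simp add: ennreal_mult'[symmetric] less_imp_le[OF lik_pos] lik_pos[THEN dual_order.strict_implies_not_eq])
  also have "\<dots> \<le> 1"
    by (simp add: nn_integral_mix sum_PPhi_le_1)
  finally show ?thesis .
qed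

lemma sum_PX_nn_integral_out_div_lik_sf_le_1:
  "(\<Sum>x\<in>Xset N. ennreal (PX q N x) *
      (\<integral>\<^sup>+z. ennreal (out N (Y x \<phi> z) / lik_sf N (Y x \<phi> z) x \<phi>) \<partial>Noise_law \<sigma> N)) \<le> 1"
proof -
  have "(\<Sum>x\<in>Xset N. ennreal (PX q N x) *
          (\<integral>\<^sup>+z. ennreal (out N (Y x \<phi> z) / lik_sf N (Y x \<phi> z) x \<phi>) \<partial>Noise_law \<sigma> N))
      = (\<Sum>x\<in>Xset N. ennreal (PX q N x) *
          (\<integral>\<^sup>+y. ennreal (lik N y x \<phi>) * ennreal (out N y / lik_sf N y x \<phi>) \<partial>lebesgue_grid N))"
    by (intro sum.cong refl arg_cong2[where f="(*)"] nn_integral_Noise_law_Yout[OF sigma_pos])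
       (auto simp: PY_restrict PYgXsfPhi_restrict)
  also have "\<dots> = (\<integral>\<^sup>+y. (\<Sum>x\<in>Xset N. ennreal (out N y * (PX q N x * lik N y x \<phi> / lik_sf N y x \<phi>)))
                    \<partial>lebesgue_grid N)"
    by (simp add: nn_integral_sum nn_integral_cmult[symmetric] ennreal_mult'[symmetric] PX_nonneg
                  less_imp_le[OF lik_pos] mult_ac)
  also have "\<dots> = (\<integral>\<^sup>+y. ennreal (out N y * (\<Sum>x\<in>Xset N. PX q N x * lik N y x \<phi> / lik_sf N y x \<phi>))
                    \<partial>lebesgue_grid N)"
    by (intro nn_integral_cong)
       (simp add: sum_distrib_left sum_ennreal out_nonneg PX_nonneg less_imp_le[OF lik_pos]
                  less_imp_le[OF lik_sf_pos])
  also have "\<dots> = (\<integral>\<^sup>+y. ennreal (out N y) \<partial>lebesgue_grid N)"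
    by (simp add: sum_PX_lik_div_lik_sf)
  also have "\<dots> \<le> 1"
    by (simp add: nn_integral_out sum_PPhi_le_1)
  finally show ?thesis .
qed

abbreviation "\<Omega> N \<equiv> Omega \<sigma> q p K N"

lemma space_Omega: "space (\<Omega> N) = (Xset N \<times> Phiset K N) \<times> space (Noise_law \<sigma> N)"
  by (simp add: Omega_def XPhi_law_def space_pair_measure)

lemma measurable_Omega_fibrewise:
  assumes "\<And>x \<phi>. x \<in> Xset N \<Longrightarrow> \<phi> \<in> Phiset K N \<Longrightarrow> (\<lambda>z. f ((x, \<phi>), z)) \<in> measurable (Noise_law \<sigma> N) M"
  shows "f \<in> measurable (\<Omega> N) M"
proof -
  have sets_XPhi: "sets (XPhi_law q p K N) = sets (count_space (Xset N \<times> Phiset K N))"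
    by (simp add: XPhi_law_def)
  show ?thesis
    unfolding Omega_def
    by (subst measurable_cong_sets[OF sets_pair_measure_cong[OF sets_XPhi refl] refl])
       (rule measurable_pair_measure_countable1[OF countable_finite], use assms in auto)
qed

lemma nn_integral_Omega:
  assumes [measurable]: "f \<in> borel_measurable (\<Omega> N)"
  shows "(\<integral>\<^sup>+\<omega>. f \<omega> \<partial>\<Omega> N)
       = (\<Sum>(x, \<phi>)\<in>Xset N \<times> Phiset K N. ennreal (PX q N x * PPhi p N \<phi>) * (\<integral>\<^sup>+z. f ((x, \<phi>), z) \<partial>Noise_law \<sigma> N))"
proof -
  interpret Noise: prob_space "Noise_law \<sigma> N" by (rule prob_space_Noise_law[OF sigma_pos])
  have "f \<in> borel_measurable (XPhi_law q p K N \<Otimes>\<^sub>M Noise_law \<sigma> N)"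
    using assms by (simp add: Omega_def)
  then have "(\<integral>\<^sup>+\<omega>. f \<omega> \<partial>\<Omega> N) = (\<integral>\<^sup>+d. (\<integral>\<^sup>+z. f (d, z) \<partial>Noise_law \<sigma> N) \<partial>XPhi_law q p K N)"
    unfolding Omega_def by (rule Noise.nn_integral_fst[symmetric])
  also have "\<dots> = (\<integral>\<^sup>+(x, \<phi>). ennreal (PX q N x * PPhi p N \<phi>) * (\<integral>\<^sup>+z. f ((x, \<phi>), z) \<partial>Noise_law \<sigma> N)
                    \<partial>count_space (Xset N \<times> Phiset K N))"
    unfolding XPhi_law_def by (subst nn_integral_density) (auto simp: split_beta')
  finally show ?thesis
    by (simp add: nn_integral_count_space_finite)
qed

lemma sum_PX_PPhi:
  "(\<Sum>(x, \<phi>)\<in>Xset N \<times> Phiset K N. ennreal (PX q N x * PPhi p N \<phi>)) = ennreal (\<Sum>\<phi>\<in>Phiset K N. PPhi p N \<phi>)"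
proof -
  have "(\<Sum>(x, \<phi>)\<in>Xset N \<times> Phiset K N. ennreal (PX q N x * PPhi p N \<phi>))
      = ennreal (\<Sum>(x, \<phi>)\<in>Xset N \<times> Phiset K N. PX q N x * PPhi p N \<phi>)"
    unfolding case_prod_unfold by (rule sum_ennreal) (auto intro!: mult_nonneg_nonneg PX_nonneg PPhi_nonneg)
  also have "(\<Sum>(x, \<phi>)\<in>Xset N \<times> Phiset K N. PX q N x * PPhi p N \<phi>) = (\<Sum>\<phi>\<in>Phiset K N. PPhi p N \<phi>)"
    by (simp add: sum.cartesian_product[symmetric] sum_product[symmetric] sum_PX)
  finally show ?thesis .
qed

lemma emeasure_space_Omega: "emeasure (\<Omega> N) (space (\<Omega> N)) = ennreal (\<Sum>\<phi>\<in>Phiset K N. PPhi p N \<phi>)"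
proof -
  interpret Noise: prob_space "Noise_law \<sigma> N" by (rule prob_space_Noise_law[OF sigma_pos])
  have "emeasure (\<Omega> N) (space (\<Omega> N)) = (\<integral>\<^sup>+\<omega>. 1 \<partial>\<Omega> N)"
    by simp
  also have "\<dots> = (\<Sum>(x, \<phi>)\<in>Xset N \<times> Phiset K N. ennreal (PX q N x * PPhi p N \<phi>))"
    by (subst nn_integral_Omega) (auto simp: Noise.emeasure_space_1 case_prod_beta)
  also have "\<dots> = ennreal (\<Sum>\<phi>\<in>Phiset K N. PPhi p N \<phi>)"
    by (rule sum_PX_PPhi)
  finally show ?thesis .
qed

lemma prob_space_Omega: "K \<le> N\<^sup>2 \<Longrightarrow> prob_space (\<Omega> N)"
  by (rule prob_spaceI) (simp add: emeasure_space_Omega sum_PPhi_eq_1)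

text \<open>Patterns of probability zero are sent to \<open>\<infinity>\<close>: they form a null set, so the expectation
  bound is unaffected, and wherever \<open>mix_ratio\<close> is finite the pattern has positive probability,
  which the lower bound \<open>ratio_floor\<close> needs.\<close>
definition mix_ratio :: "nat \<Rightarrow> (bmat \<times> pattern) \<times> rmat \<Rightarrow> ennreal" where
  "mix_ratio N = (\<lambda>((x, \<phi>), z). if PPhi p N \<phi> = 0 then \<infinity>
                                else ennreal (mix N (Y x \<phi> z) x / lik N (Y x \<phi> z) x \<phi>))"

definition sf_ratio :: "nat \<Rightarrow> (bmat \<times> pattern) \<times> rmat \<Rightarrow> ennreal" where
  "sf_ratio N = (\<lambda>((x, \<phi>), z). ennreal (out N (Y x \<phi> z) / lik_sf N (Y x \<phi> z) x \<phi>))"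

lemma measurable_mix_ratio [measurable]: "mix_ratio N \<in> borel_measurable (\<Omega> N)"
proof (rule measurable_Omega_fibrewise)
  fix x \<phi>
  have "(\<lambda>z. ennreal (mix N (Y x \<phi> z) x / lik N (Y x \<phi> z) x \<phi>)) \<in> borel_measurable (Noise_law \<sigma> N)"
    by (rule measurable_comp_Yout) (measurable, simp only: WPhi_restrict PYgXPhi_restrict)
  then show "(\<lambda>z. mix_ratio N ((x, \<phi>), z)) \<in> borel_measurable (Noise_law \<sigma> N)"
    by (simp add: mix_ratio_def)
qed

lemma measurable_sf_ratio [measurable]: "sf_ratio N \<in> borel_measurable (\<Omega> N)"
proof (rule measurable_Omega_fibrewise)
  fix x \<phi>
  have "(\<lambda>z. ennreal (out N (Y x \<phi> z) / lik_sf N (Y x \<phi> z) x \<phi>)) \<in> borel_measurable (Noise_law \<sigma> N)"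
    by (rule measurable_comp_Yout) (measurable, simp only: PY_restrict PYgXsfPhi_restrict)
  then show "(\<lambda>z. sf_ratio N ((x, \<phi>), z)) \<in> borel_measurable (Noise_law \<sigma> N)"
    by (simp add: sf_ratio_def)
qed

lemma nn_integral_mix_ratio_le_1: "(\<integral>\<^sup>+\<omega>. mix_ratio N \<omega> \<partial>\<Omega> N) \<le> 1"
proof -
  have "(\<integral>\<^sup>+\<omega>. mix_ratio N \<omega> \<partial>\<Omega> N)
      = (\<Sum>(x, \<phi>)\<in>Xset N \<times> Phiset K N. ennreal (PX q N x * PPhi p N \<phi>) * (\<integral>\<^sup>+z. mix_ratio N ((x, \<phi>), z) \<partial>Noise_law \<sigma> N))"
    by (rule nn_integral_Omega) measurable
  also have "\<dots> \<le> (\<Sum>(x, \<phi>)\<in>Xset N \<times> Phiset K N. ennreal (PX q N x * PPhi p N \<phi>))"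
  proof (intro sum_mono, clarify)
    fix x \<phi>
    show "ennreal (PX q N x * PPhi p N \<phi>) * (\<integral>\<^sup>+z. mix_ratio N ((x, \<phi>), z) \<partial>Noise_law \<sigma> N)
        \<le> ennreal (PX q N x * PPhi p N \<phi>)"
      using nn_integral_mix_div_lik_le_1[of N x \<phi>]
      by (cases "PPhi p N \<phi> = 0") (simp_all add: mix_ratio_def mult_left_le)
  qed
  also have "\<dots> = ennreal (\<Sum>\<phi>\<in>Phiset K N. PPhi p N \<phi>)"
    by (rule sum_PX_PPhi)
  also have "\<dots> \<le> 1"
    by (simp add: sum_PPhi_le_1)
  finally show ?thesis .
qed

lemma nn_integral_sf_ratio_le_1: "(\<integral>\<^sup>+\<omega>. sf_ratio N \<omega> \<partial>\<Omega> N) \<le> 1"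
proof -
  let ?I = "\<lambda>x \<phi>. \<integral>\<^sup>+z. ennreal (out N (Y x \<phi> z) / lik_sf N (Y x \<phi> z) x \<phi>) \<partial>Noise_law \<sigma> N"
  have "(\<integral>\<^sup>+\<omega>. sf_ratio N \<omega> \<partial>\<Omega> N)
      = (\<Sum>(x, \<phi>)\<in>Xset N \<times> Phiset K N. ennreal (PX q N x * PPhi p N \<phi>) * ?I x \<phi>)"
    using nn_integral_Omega[OF measurable_sf_ratio] by (simp add: sf_ratio_def)
  also have "\<dots> = (\<Sum>\<phi>\<in>Phiset K N. ennreal (PPhi p N \<phi>) * (\<Sum>x\<in>Xset N. ennreal (PX q N x) * ?I x \<phi>))"
    by (simp add: sum.cartesian_product[symmetric] sum_distrib_left ennreal_mult PX_nonneg PPhi_nonneg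
                  mult_ac sum.swap[of _ "Xset N"])
  also have "\<dots> \<le> (\<Sum>\<phi>\<in>Phiset K N. ennreal (PPhi p N \<phi>))"
    using sum_PX_nn_integral_out_div_lik_sf_le_1 by (intro sum_mono mult_left_le) auto
  also have "\<dots> \<le> 1"
    using sum_PPhi_le_1 by (simp add: sum_ennreal PPhi_nonneg)
  finally show ?thesis .
qed

definition p_min :: real where
  "p_min = Min {p k | k. k \<le> K \<and> 0 < p k}"

lemma p_min_le: "k \<le> K \<Longrightarrow> 0 < p k \<Longrightarrow> p_min \<le> p k"
  unfolding p_min_def by (rule Min_le) auto

lemma p_min_pos: "0 < p_min"
proof -
  have "\<exists>k\<le>K. 0 < p k"
  proof (rule ccontr)
    assume "\<not> (\<exists>k\<le>K. 0 < p k)"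
    then have "(\<Sum>k\<le>K. p k) = 0"
      using p_nonneg by (intro sum.neutral) (force simp: not_less)
    with sum_p show False by simp
  qed
  then show ?thesis
    unfolding p_min_def by (subst Min_gr_iff) auto
qed

definition ratio_floor :: "nat \<Rightarrow> real" where
  "ratio_floor N = p_min / real (N\<^sup>2) ^ K * min q (1 - q) ^ (2 * K * N)"

lemma PPhi_ge_p_min:
  assumes \<phi>: "\<phi> \<in> Phiset K N" and nz: "PPhi p N \<phi> \<noteq> 0" and N: "1 \<le> N"
  shows "p_min / real (N\<^sup>2) ^ K \<le> PPhi p N \<phi>"
proof -
  let ?k = "card \<phi>"
  have k: "?k \<le> K" using \<phi> by (auto simp: Phiset_def)
  have kN: "?k \<le> N\<^sup>2"
    using \<phi> card_mono[OF finite_grid, of \<phi> N] by (simp add: Phiset_def card_grid)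
  have pk: "0 < p ?k"
    using nz p_nonneg[OF k] by (auto simp: PPhi_def)
  have "real (N\<^sup>2 choose ?k) \<le> real (N\<^sup>2) ^ ?k"
    using binomial_le_pow[OF kN] by (simp flip: of_nat_power)
  also have "\<dots> \<le> real (N\<^sup>2) ^ K"
    using N k by (intro power_increasing) auto
  finally have binom_le: "real (N\<^sup>2 choose ?k) \<le> real (N\<^sup>2) ^ K" .
  have "p_min / real (N\<^sup>2) ^ K \<le> p ?k / real (N\<^sup>2) ^ K"
    using N by (intro divide_right_mono p_min_le[OF k pk]) auto
  also have "\<dots> \<le> p ?k / real (N\<^sup>2 choose ?k)"
    using pk kN binom_le N by (intro divide_left_mono) (auto intro!: mult_pos_pos)
  finally show ?thesis by (simp add: PPhi_def)
qed

lemma prod_sf_weights_ge: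
  assumes "\<phi> \<in> Phiset K N"
  shows "min q (1 - q) ^ (2 * K * N) \<le> (\<Prod>mn\<in>sfset N \<phi>. if x mn then q else 1 - q)"
proof -
  have "min q (1 - q) ^ (2 * K * N) \<le> min q (1 - q) ^ card (sfset N \<phi>)"
    using q_pos q_less_1 card_sfset_le[OF assms] by (intro power_decreasing) auto
  also have "\<dots> \<le> (\<Prod>mn\<in>sfset N \<phi>. if x mn then q else 1 - q)"
    using q_pos q_less_1 by (simp flip: prod_constant, intro prod_mono) auto
  finally show ?thesis .
qed

lemma PPhi_mult_lik_le_mix: "\<phi> \<in> Phiset K N \<Longrightarrow> PPhi p N \<phi> * lik N y x \<phi> \<le> mix N y x"
  unfolding WPhi_def
  by (rule member_le_sum) (auto intro!: mult_nonneg_nonneg PPhi_nonneg less_imp_le[OF lik_pos])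

lemma PPhi_mult_lik_sf_le_out:
  assumes \<phi>: "\<phi> \<in> Phiset K N" and x: "x \<in> Xset N"
  shows "PPhi p N \<phi> * (\<Prod>mn\<in>sfset N \<phi>. if x mn then q else 1 - q) * lik_sf N y x \<phi> \<le> out N y"
proof -
  let ?class = "{x' \<in> Xset N. \<forall>mn\<in>sfset N \<phi>. x' mn = x mn}"
  have "PPhi p N \<phi> * (\<Prod>mn\<in>sfset N \<phi>. if x mn then q else 1 - q) * lik_sf N y x \<phi>
      = (\<Sum>x'\<in>?class. PX q N x' * (PPhi p N \<phi> * lik N y x' \<phi>))"
    unfolding PYgXsfPhi_def sum_distrib_left
    by (intro sum.cong refl) (simp add: PX_split[of q N _ \<phi>] cong: prod.cong)
  also have "\<dots> \<le> (\<Sum>x'\<in>?class. PX q N x' * mix N y x')"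
    by (intro sum_mono mult_left_mono PPhi_mult_lik_le_mix[OF \<phi>] PX_nonneg)
  also have "\<dots> \<le> (\<Sum>x'\<in>Xset N. PX q N x' * mix N y x')"
    by (intro sum_mono2) (auto intro!: mult_nonneg_nonneg PX_nonneg mix_nonneg)
  finally show ?thesis unfolding PY_def .
qed

lemma ratio_floor_le:
  assumes x: "x \<in> Xset N" and \<phi>: "\<phi> \<in> Phiset K N" and nz: "PPhi p N \<phi> \<noteq> 0" and N: "1 \<le> N"
  shows "0 < ratio_floor N"
    and "ratio_floor N \<le> mix N y x / lik N y x \<phi>"
    and "ratio_floor N \<le> out N y / lik_sf N y x \<phi>"
proof -
  let ?c = "min q (1 - q) ^ (2 * K * N)"
  have c: "0 < ?c" "?c \<le> 1"
    using q_pos q_less_1 by (auto intro: power_le_one)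
  have a: "0 < p_min / real (N\<^sup>2) ^ K"
    using p_min_pos N by simp
  note PPhi_ge = PPhi_ge_p_min[OF \<phi> nz N]
  show "0 < ratio_floor N"
    unfolding ratio_floor_def by (rule mult_pos_pos[OF a c(1)])
  have "ratio_floor N \<le> PPhi p N \<phi>"
    unfolding ratio_floor_def using PPhi_ge a c by (meson mult_left_le order_trans less_imp_le)
  also have "\<dots> \<le> mix N y x / lik N y x \<phi>"
    using PPhi_mult_lik_le_mix[OF \<phi>] lik_pos by (simp add: pos_le_divide_eq)
  finally show "ratio_floor N \<le> mix N y x / lik N y x \<phi>" .
  have "ratio_floor N \<le> PPhi p N \<phi> * (\<Prod>mn\<in>sfset N \<phi>. if x mn then q else 1 - q)"
    unfolding ratio_floor_def using PPhi_ge prod_sf_weights_ge[OF \<phi>] a c by (intro mult_mono) auto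
  also have "\<dots> \<le> out N y / lik_sf N y x \<phi>"
    using PPhi_mult_lik_sf_le_out[OF \<phi> x] lik_sf_pos[OF x] by (simp add: pos_le_divide_eq)
  finally show "ratio_floor N \<le> out N y / lik_sf N y x \<phi>" .
qed

lemma Iq_minus_Iq_tilde:
  assumes x: "x \<in> Xset N" and "0 < mix N (Y x \<phi> z) x" "0 < out N (Y x \<phi> z)"
  shows "Iq R0 R1 Rs \<sigma> q p K N ((x, \<phi>), z) - Iq_tilde R0 R1 Rs \<sigma> q N ((x, \<phi>), z)
       = (log 2 (mix N (Y x \<phi> z) x / lik N (Y x \<phi> z) x \<phi>)
          - log 2 (out N (Y x \<phi> z) / lik_sf N (Y x \<phi> z) x \<phi>)) / real N ^ 2"
  using assms lik_pos[of N "Y x \<phi> z" x \<phi>] lik_sf_pos[OF x, of "Y x \<phi> z" \<phi>]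
  by (simp add: Iq_def Iq_tilde_def Let_def log_divide diff_divide_distrib)

lemma measurable_Iq_minus_Iq_tilde [measurable]:
  "(\<lambda>\<omega>. Iq R0 R1 Rs \<sigma> q p K N \<omega> - Iq_tilde R0 R1 Rs \<sigma> q N \<omega>) \<in> borel_measurable (\<Omega> N)"
proof (rule measurable_Omega_fibrewise)
  fix x \<phi>
  let ?H = "\<lambda>y. 1 / real (N\<^sup>2) * log 2 (mix N y x / out N y) - 1 / real (N\<^sup>2) * log 2 (lik N y x \<phi> / lik_sf N y x \<phi>)"
  have "(\<lambda>z. ?H (Y x \<phi> z)) \<in> borel_measurable (Noise_law \<sigma> N)"
    by (rule measurable_comp_Yout) (measurable, simp only: WPhi_restrict PYgXPhi_restrict PY_restrict PYgXsfPhi_restrict)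
  then show "(\<lambda>z. Iq R0 R1 Rs \<sigma> q p K N ((x, \<phi>), z) - Iq_tilde R0 R1 Rs \<sigma> q N ((x, \<phi>), z)) \<in> borel_measurable (Noise_law \<sigma> N)"
    by (simp add: Iq_def Iq_tilde_def Let_def)
qed

lemma abs_Iq_minus_Iq_tilde_less:
  assumes \<omega>: "\<omega> \<in> space (\<Omega> N)" and N: "1 \<le> N"
    and mix_less: "mix_ratio N \<omega> < ennreal T" and sf_less: "sf_ratio N \<omega> < ennreal T"
    and T: "log 2 T - log 2 (ratio_floor N) \<le> \<epsilon> * real N ^ 2"
  shows "\<bar>Iq R0 R1 Rs \<sigma> q p K N \<omega> - Iq_tilde R0 R1 Rs \<sigma> q N \<omega>\<bar> < \<epsilon>"
proof -
  obtain x \<phi> z where \<omega>_eq: "\<omega> = ((x, \<phi>), z)" and x: "x \<in> Xset N" and \<phi>: "\<phi> \<in> Phiset K N"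
    using \<omega> by (auto simp: space_Omega)
  define u where "u = mix N (Y x \<phi> z) x / lik N (Y x \<phi> z) x \<phi>"
  define v where "v = out N (Y x \<phi> z) / lik_sf N (Y x \<phi> z) x \<phi>"
  have nz: "PPhi p N \<phi> \<noteq> 0"
    using mix_less by (auto simp: mix_ratio_def \<omega>_eq)
  have floor: "0 < ratio_floor N" "ratio_floor N \<le> u" "ratio_floor N \<le> v"
    using ratio_floor_le[OF x \<phi> nz N] by (auto simp: u_def v_def)
  have "u < T" "v < T"
    using mix_less sf_less floor nz
    by (auto simp: mix_ratio_def sf_ratio_def \<omega>_eq u_def v_def ennreal_less_iff)
  then have "\<bar>log 2 u - log 2 v\<bar> < \<epsilon> * real N ^ 2"
    using floor T by (intro abs_log_diff_less) auto
  moreover have "0 < u" "0 < v"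
    using floor by linarith+
  then have "0 < mix N (Y x \<phi> z) x" "0 < out N (Y x \<phi> z)"
    using lik_pos[of N "Y x \<phi> z" x \<phi>] lik_sf_pos[OF x, of "Y x \<phi> z" \<phi>]
    by (auto simp: u_def v_def zero_less_divide_iff)
  ultimately show ?thesis
    using N by (simp add: \<omega>_eq Iq_minus_Iq_tilde[OF x] u_def v_def abs_divide pos_divide_less_eq)
qed

lemma prob_abs_Iq_minus_Iq_tilde_less_ge:
  assumes KN: "K \<le> N\<^sup>2" and N: "1 \<le> N" and T: "0 < T"
    and floor: "log 2 T - log 2 (ratio_floor N) \<le> \<epsilon> * real N ^ 2"
  shows "1 - 2 / T \<le> measure (\<Omega> N)
           {\<omega> \<in> space (\<Omega> N). \<bar>Iq R0 R1 Rs \<sigma> q p K N \<omega> - Iq_tilde R0 R1 Rs \<sigma> q N \<omega>\<bar> < \<epsilon>}"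
proof -
  interpret prob_space "\<Omega> N" by (rule prob_space_Omega[OF KN])
  have "1 - 2 / T \<le> prob {\<omega> \<in> space (\<Omega> N). mix_ratio N \<omega> < ennreal T \<and> sf_ratio N \<omega> < ennreal T}"
    by (rule Markov_prob_both_less_ge[OF _ _ nn_integral_mix_ratio_le_1 nn_integral_sf_ratio_le_1 T]) measurable
  also have "\<dots> \<le> prob {\<omega> \<in> space (\<Omega> N). \<bar>Iq R0 R1 Rs \<sigma> q p K N \<omega> - Iq_tilde R0 R1 Rs \<sigma> q N \<omega>\<bar> < \<epsilon>}"
    using abs_Iq_minus_Iq_tilde_less[OF _ N _ _ floor] by (intro finite_measure_mono) (auto, measurable)
  finally show ?thesis .
qed

lemma eventually_log_ratio_floor:
  assumes \<epsilon>: "0 < \<epsilon>"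
  shows "\<forall>\<^sub>F N in sequentially. \<epsilon> * real N / 2 - log 2 (ratio_floor N) \<le> \<epsilon> * real N ^ 2"
proof -
  define c where "c = min q (1 - q)"
  have c: "0 < c" "c \<le> 1" using q_pos q_less_1 by (auto simp: c_def)
  have log_floor: "log 2 (ratio_floor N) = log 2 p_min - 2 * real K * log 2 (real N) + 2 * real K * real N * log 2 c"
    if "1 \<le> N" for N
    using that p_min_pos c
    by (simp add: ratio_floor_def c_def[symmetric] log_mult log_divide log_nat_power algebra_simps)
  have "\<forall>\<^sub>F N in sequentially. \<epsilon> * real N / 2 - (a - 2 * real K * log 2 (real N)
          + 2 * real K * real N * b) \<le> \<epsilon> * real N ^ 2" if "b \<le> 0" for a b
    using \<epsilon> that by real_asymp
  from this[where a = "log 2 p_min" and b = "log 2 c"] c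
  have "\<forall>\<^sub>F N in sequentially. \<epsilon> * real N / 2 - (log 2 p_min - 2 * real K * log 2 (real N)
          + 2 * real K * real N * log 2 c) \<le> \<epsilon> * real N ^ 2"
    by simp
  with eventually_ge_at_top[of 1] show ?thesis
    by eventually_elim (simp add: log_floor)
qed

end

theorem corollary1:
  fixes R0 R1 Rs \<sigma> q \<epsilon> :: real and K :: nat and p :: "nat \<Rightarrow> real"
  assumes "0 < R1" "R1 < R0" "0 < Rs" "0 < \<sigma>" "0 < q" "q < 1"
    and "\<And>k. k \<le> K \<Longrightarrow> 0 \<le> p k" "(\<Sum>k\<le>K. p k) = 1"
    and "0 < \<epsilon>"
  shows "(\<lambda>N. measure (Omega \<sigma> q p K N)
            {\<omega> \<in> space (Omega \<sigma> q p K N).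
               \<bar>Iq R0 R1 Rs \<sigma> q p K N \<omega> - Iq_tilde R0 R1 Rs \<sigma> q N \<omega>\<bar> < \<epsilon>})
         \<longlonglongrightarrow> 1"
proof -
  interpret reram_channel R0 R1 Rs \<sigma> q p K
    using assms by unfold_locales auto
  let ?good = "\<lambda>N. {\<omega> \<in> space (\<Omega> N). \<bar>Iq R0 R1 Rs \<sigma> q p K N \<omega> - Iq_tilde R0 R1 Rs \<sigma> q N \<omega>\<bar> < \<epsilon>}"
  have K_le: "\<forall>\<^sub>F N in sequentially. K \<le> N\<^sup>2"
    using eventually_ge_at_top[of K] by eventually_elim (metis le_square order_trans power2_eq_square)
  have "\<forall>\<^sub>F N in sequentially. 1 - 2 / 2 powr (\<epsilon> * real N / 2) \<le> measure (\<Omega> N) (?good N)"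
    using K_le eventually_ge_at_top[of 1] eventually_log_ratio_floor[OF assms(9)]
    by eventually_elim (rule prob_abs_Iq_minus_Iq_tilde_less_ge, auto)
  moreover have "\<forall>\<^sub>F N in sequentially. measure (\<Omega> N) (?good N) \<le> 1"
    using K_le by eventually_elim (rule prob_space.prob_le_1[OF prob_space_Omega])
  moreover have "(\<lambda>N. 1 - 2 / 2 powr (\<epsilon> * real N / 2)) \<longlonglongrightarrow> 1"
    using assms(9) by real_asymp
  ultimately show ?thesis
    by (rule tendsto_sandwich[OF _ _ _ tendsto_const])
qed

end
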